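(* For all positive integers $n$ and $j$, \[ \breve K\big(S_n(0)^{5j+1}S_n(1)\big)=\breve K\big(S_n(0)\,S_n(1)^{3j+1}\big). \]
   Context: For finite sequences of positive integers, $\alpha\beta$ denotes concatenation and $\alpha^k$ the concatenation of $k$ copies of $\alpha$. The continued fraction $[a_1;a_2:\dots:a_k]$ means $a_1+1/(a_2+1/(\cdots+1/a_k))$. For a sequence $(a_1,\dots,a_k)$ of positive integers with $k\ge2$, $\breve K(a_1,\dots,a_k)$ is the integer $c$ where $[a_1;a_2:\dots:a_{k-1}]=c/d$ with $\gcd(c,d)=1$, $c,d>0$ (the last entry $a_k$ is omitted). For a positive integer $n$ let $a_n=n^2+3$, $b_n=n^4+5n^2+5$, $S_n(0)=(na_n,na_n)$ and $S_n(1)=(nb_n,nb_n)$. *)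

theory Defs
  imports Complex_Main
begin

text \<open>Finite continued fraction [a1; a2 : ... : ak] as a rational number
  (defined for nonempty lists; the empty list is given the dummy value 0).\<close>
fun cfrac :: "nat list \<Rightarrow> rat" where
  "cfrac [] = 0"
| "cfrac [a] = of_nat a"
| "cfrac (a # b # rest) = of_nat a + 1 / cfrac (b # rest)"

text \<open>Kbreve (a1,...,ak): numerator c of the reduced fraction c/d = [a1;...;a_{k-1}]
  (last entry omitted). quotient_of gives the reduced form with positive denominator.\<close>
definition Kbreve :: "nat list \<Rightarrow> int" where
  "Kbreve xs = fst (quotient_of (cfrac (butlast xs)))"

definition lpow :: "nat list \<Rightarrow> nat \<Rightarrow> nat list" where
  "lpow xs k = concat (replicate k xs)"

definition a_seq :: "nat \<Rightarrow> nat" where "a_seq n = n^2 + 3"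
definition b_seq :: "nat \<Rightarrow> nat" where "b_seq n = n^4 + 5*n^2 + 5"

definition S :: "nat \<Rightarrow> nat \<Rightarrow> nat list" where
  "S n i = (if i = 0 then [n * a_seq n, n * a_seq n] else [n * b_seq n, n * b_seq n])"

end

theory Submission
  imports Defs
begin

text \<open>The numerator of a continued fraction is the top-left entry of the product of
  the matrices M(a) = [[a,1],[1,0]] over its entries.  Hence, with A = n a_n and
  B = n b_n, both sides are the top-left entry of X P^j Y with X = M(A)^2,
  Y = M(B), and P = M(A)^10 on the left, P = M(B)^6 on the right.  Both choices of P
  have determinant 1, so by Cayley-Hamilton the sequence indexed by j satisfies
  u(j+2) = tr(P) u(j+1) - u(j); it therefore suffices that the two traces agree and that
  the two sequences agree for j = 0 and j = 1.  The traces agree because A and B are the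
  odd Lucas-type polynomials of degrees 3 and 5 in n, so M(A)^2 and M(B)^2 have the
  traces of M(n)^6 and M(n)^10, and both choices of P have the trace of M(n)^30.\<close>

type_synonym mat2 = "int \<times> int \<times> int \<times> int"

fun mat2_mult :: "mat2 \<Rightarrow> mat2 \<Rightarrow> mat2" where
  "mat2_mult (a, b, c, d) (e, f, g, h) = (a*e + b*g, a*f + b*h, c*e + d*g, c*f + d*h)"

definition mat2_one :: mat2 where "mat2_one = (1, 0, 0, 1)"

fun mat2_pow :: "mat2 \<Rightarrow> nat \<Rightarrow> mat2" where
  "mat2_pow M 0 = mat2_one"
| "mat2_pow M (Suc k) = mat2_mult M (mat2_pow M k)"

fun mat2_trace :: "mat2 \<Rightarrow> int" where "mat2_trace (a, b, c, d) = a + d"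

fun mat2_det :: "mat2 \<Rightarrow> int" where "mat2_det (a, b, c, d) = a*d - b*c"

fun mat2_lincomb :: "int \<Rightarrow> mat2 \<Rightarrow> mat2 \<Rightarrow> mat2" where
  "mat2_lincomb s (a, b, c, d) (e, f, g, h) = (s*a - e, s*b - f, s*c - g, s*d - h)"

lemma mat2_mult_assoc: "mat2_mult (mat2_mult X Y) Z = mat2_mult X (mat2_mult Y Z)"
  by (cases X; cases Y; cases Z) (simp add: algebra_simps)

lemma mat2_mult_one [simp]: "mat2_mult mat2_one X = X" "mat2_mult X mat2_one = X"
  by (cases X, simp add: mat2_one_def)+

lemma mat2_pow_add: "mat2_pow M (a + b) = mat2_mult (mat2_pow M a) (mat2_pow M b)"
  by (induction a) (auto simp: mat2_mult_assoc)

lemma mat2_pow_mult: "mat2_pow M (a * b) = mat2_pow (mat2_pow M a) b"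
  by (induction b) (auto simp: mat2_pow_add)

lemma mat2_det_mult: "mat2_det (mat2_mult X Y) = mat2_det X * mat2_det Y"
  by (cases X; cases Y) (simp add: algebra_simps)

lemma mat2_det_pow: "mat2_det (mat2_pow M k) = mat2_det M ^ k"
  by (induction k) (auto simp: mat2_det_mult mat2_one_def)

lemma mat2_cayley_hamilton:
  "mat2_det M = 1 \<Longrightarrow> mat2_mult M M = mat2_lincomb (mat2_trace M) M mat2_one"
  by (cases M) (simp add: mat2_one_def algebra_simps)

lemma mat2_mult_lincomb_left:
  "mat2_mult (mat2_lincomb s U V) W = mat2_lincomb s (mat2_mult U W) (mat2_mult V W)"
  by (cases U; cases V; cases W) (simp add: algebra_simps)

lemma mat2_mult_lincomb_right:
  "mat2_mult X (mat2_lincomb s U V) = mat2_lincomb s (mat2_mult X U) (mat2_mult X V)"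
  by (cases X; cases U; cases V) (simp add: algebra_simps)

lemma fst_mat2_lincomb: "fst (mat2_lincomb s U V) = s * fst U - fst V"
  by (cases U; cases V) simp

lemma mat2_pow_Suc_Suc:
  assumes "mat2_det M = 1"
  shows "mat2_pow M (Suc (Suc k))
    = mat2_lincomb (mat2_trace M) (mat2_pow M (Suc k)) (mat2_pow M k)"
  using assms
  by (simp add: mat2_mult_assoc[symmetric] mat2_cayley_hamilton mat2_mult_lincomb_left)

lemma linear_recurrence_unique:
  fixes u v :: "nat \<Rightarrow> int"
  assumes "\<And>k. u (Suc (Suc k)) = s * u (Suc k) - u k"
    and "\<And>k. v (Suc (Suc k)) = s * v (Suc k) - v k"
    and "u 0 = v 0" and "u 1 = v 1"
  shows "u k = v k"
proof -
  have "u k = v k \<and> u (Suc k) = v (Suc k)"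
    by (induction k) (use assms in auto)
  then show ?thesis ..
qed

lemma fst_mat2_pow_sandwich_recurrence:
  assumes "mat2_det M = 1"
  shows "fst (mat2_mult (mat2_mult X (mat2_pow M (Suc (Suc k)))) Y)
    = mat2_trace M * fst (mat2_mult (mat2_mult X (mat2_pow M (Suc k))) Y)
      - fst (mat2_mult (mat2_mult X (mat2_pow M k)) Y)"
  using assms
  by (simp only: mat2_pow_Suc_Suc mat2_mult_lincomb_right mat2_mult_lincomb_left
      fst_mat2_lincomb)

lemma fst_mat2_pow_sandwich_eq:
  assumes "mat2_det P = 1" "mat2_det Q = 1" "mat2_trace P = mat2_trace Q"
    and "fst (mat2_mult (mat2_mult X P) Y) = fst (mat2_mult (mat2_mult X Q) Y)"
  shows "fst (mat2_mult (mat2_mult X (mat2_pow P j)) Y)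
    = fst (mat2_mult (mat2_mult X (mat2_pow Q j)) Y)"
  by (rule linear_recurrence_unique[where s = "mat2_trace P"])
    (use assms fst_mat2_pow_sandwich_recurrence in simp_all)

definition cf_mat :: "int \<Rightarrow> mat2" where "cf_mat a = (a, 1, 1, 0)"

fun cf_mat_prod :: "nat list \<Rightarrow> mat2" where
  "cf_mat_prod [] = mat2_one"
| "cf_mat_prod (a # r) = mat2_mult (cf_mat (int a)) (cf_mat_prod r)"

lemma cf_mat_prod_append:
  "cf_mat_prod (xs @ ys) = mat2_mult (cf_mat_prod xs) (cf_mat_prod ys)"
  by (induction xs) (auto simp: mat2_mult_assoc)

lemma cf_mat_prod_lpow: "cf_mat_prod (lpow xs k) = mat2_pow (cf_mat_prod xs) k"
  by (induction k) (auto simp: lpow_def cf_mat_prod_append)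

text \<open>With [[p, q], [r, s]] the product of the matrices of the entries of xs,
  cfrac xs = p / r.\<close>

definition cf_num :: "nat list \<Rightarrow> int" where "cf_num xs = fst (cf_mat_prod xs)"
definition cf_den :: "nat list \<Rightarrow> int" where "cf_den xs = fst (snd (snd (cf_mat_prod xs)))"

lemma cf_num_Nil [simp]: "cf_num [] = 1" and cf_den_Nil [simp]: "cf_den [] = 0"
  by (simp_all add: cf_num_def cf_den_def mat2_one_def)

lemma cf_num_Cons [simp]: "cf_num (a # r) = int a * cf_num r + cf_den r"
  and cf_den_Cons [simp]: "cf_den (a # r) = cf_num r"
  by (cases "cf_mat_prod r"; simp add: cf_num_def cf_den_def cf_mat_def)+

lemma cf_num_pos_cf_den_nonneg:
  "\<forall>x\<in>set xs. x > 0 \<Longrightarrow> cf_num xs > 0 \<and> cf_den xs \<ge> 0"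
  by (induction xs) (auto intro!: add_pos_nonneg)

lemma coprime_cf_num_cf_den: "coprime (cf_num xs) (cf_den xs)"
proof (induction xs)
  case (Cons a r)
  have "gcd (cf_num r) (int a * cf_num r + cf_den r) = gcd (cf_num r) (cf_den r)"
    by (rule gcd_add_mult)
  then show ?case
    using Cons by (simp add: coprime_iff_gcd_eq_1 gcd.commute)
qed simp

lemma cfrac_eq_cf_num_div_cf_den:
  "xs \<noteq> [] \<Longrightarrow> \<forall>x\<in>set xs. x > 0 \<Longrightarrow> cfrac xs = of_int (cf_num xs) / of_int (cf_den xs)"
proof (induction xs rule: cfrac.induct)
  case (3 a b rest)
  have "cf_num (b # rest) > 0"
    using cf_num_pos_cf_den_nonneg[of "b # rest"] "3.prems"(2) by simp
  then have "(0::rat) < of_int (cf_num (b # rest))"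
    by (simp only: of_int_0_less_iff)
  then show ?case
    using 3 by (simp add: field_simps add.commute)
qed simp_all

lemma quotient_of_cfrac:
  assumes "xs \<noteq> []" "\<forall>x\<in>set xs. x > 0"
  shows "quotient_of (cfrac xs) = (cf_num xs, cf_den xs)"
proof -
  obtain a r where xs: "xs = a # r"
    using assms(1) by (cases xs) auto
  have "cf_den xs > 0"
    using cf_num_pos_cf_den_nonneg[of r] assms(2) by (simp add: xs)
  moreover have "cfrac xs = Fract (cf_num xs) (cf_den xs)"
    using cfrac_eq_cf_num_div_cf_den[OF assms] by (simp add: Fract_of_int_quotient)
  ultimately show ?thesis
    using coprime_cf_num_cf_den[of xs] by (simp add: quotient_of_Fract normalize_def)
qed

lemma Kbreve_snoc:
  "xs \<noteq> [] \<Longrightarrow> \<forall>x\<in>set xs. x > 0 \<Longrightarrow> Kbreve (xs @ [z]) = fst (cf_mat_prod xs)"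
  by (simp add: Kbreve_def quotient_of_cfrac cf_num_def)

lemma set_lpow_subset: "set (lpow xs k) \<subseteq> set xs"
  by (auto simp: lpow_def)

text \<open>Equal traces and the case j = 1, as polynomial identities in x = n.\<close>

lemma lucas_trace_identity:
  fixes x a b :: int
  assumes "a = x^3 + 3*x" "b = x^5 + 5*x^3 + 5*x"
  shows "mat2_trace (mat2_pow (mat2_mult (cf_mat a) (cf_mat a)) 5)
    = mat2_trace (mat2_pow (mat2_mult (cf_mat b) (cf_mat b)) 3)"
  unfolding assms by (simp add: numeral_eq_Suc cf_mat_def mat2_one_def algebra_simps)

lemma lucas_entry_identity:
  fixes x a b :: int
  assumes "a = x^3 + 3*x" "b = x^5 + 5*x^3 + 5*x"
  shows "fst (mat2_mult (mat2_mult (mat2_mult (cf_mat a) (cf_mat a))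
            (mat2_pow (mat2_mult (cf_mat a) (cf_mat a)) 5)) (cf_mat b))
       = fst (mat2_mult (mat2_mult (mat2_mult (cf_mat a) (cf_mat a))
            (mat2_pow (mat2_mult (cf_mat b) (cf_mat b)) 3)) (cf_mat b))"
  unfolding assms by (simp add: numeral_eq_Suc cf_mat_def mat2_one_def algebra_simps)

theorem proposition2:
  fixes n j :: nat
  assumes "n \<ge> 1" and "j \<ge> 1"
  shows "Kbreve (lpow (S n 0) (5*j+1) @ S n 1) = Kbreve (S n 0 @ lpow (S n 1) (3*j+1))"
proof -
  define A where "A = n * a_seq n"
  define B where "B = n * b_seq n"
  define MA where "MA = mat2_mult (cf_mat (int A)) (cf_mat (int A))"
  define MB where "MB = mat2_mult (cf_mat (int B)) (cf_mat (int B))"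
  have pos: "A > 0" "B > 0"
    using assms(1) by (auto simp: A_def B_def a_seq_def b_seq_def)
  have A: "int A = int n ^ 3 + 3 * int n" and B: "int B = int n ^ 5 + 5 * int n ^ 3 + 5 * int n"
    by (simp_all add: A_def B_def a_seq_def b_seq_def algebra_simps numeral_eq_Suc)
  have "Kbreve (lpow (S n 0) (5*j+1) @ S n 1) = Kbreve ((lpow [A, A] (5*j+1) @ [B]) @ [B])"
    by (simp add: S_def A_def B_def)
  also have "\<dots> = fst (mat2_mult (mat2_mult MA (mat2_pow (mat2_pow MA 5) j)) (cf_mat (int B)))"
    using pos set_lpow_subset[of "[A, A]" "5*j+1"]
    by (subst Kbreve_snoc) (auto simp: cf_mat_prod_append cf_mat_prod_lpow MA_def
        mat2_pow_mult[symmetric] mat2_mult_assoc)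
  also have "\<dots> = fst (mat2_mult (mat2_mult MA (mat2_pow (mat2_pow MB 3) j)) (cf_mat (int B)))"
    using lucas_trace_identity[OF A B] lucas_entry_identity[OF A B]
    by (intro fst_mat2_pow_sandwich_eq) (simp_all add: MA_def MB_def mat2_det_pow
        mat2_det_mult cf_mat_def)
  also have "\<dots> = Kbreve (([A, A] @ lpow [B, B] (3*j) @ [B]) @ [B])"
    using pos set_lpow_subset[of "[B, B]" "3*j"]
    by (subst Kbreve_snoc) (auto simp: cf_mat_prod_append cf_mat_prod_lpow MA_def MB_def
        mat2_pow_mult mat2_mult_assoc)
  also have "\<dots> = Kbreve (S n 0 @ lpow (S n 1) (3*j+1))"
    by (simp add: S_def A_def B_def lpow_def replicate_append_same[symmetric]
        del: replicate_append_same)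
  finally show ?thesis .
qed

end
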